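(* Let $N\ge1$, $0<s<1$, let $G$ be an Orlicz function satisfying hypothesis (H) below with $p=\mathrm{index}(G)$, and let $u\in C^1(\mathbb{R}^N)$. Then for every $x\in\mathbb{R}^N$, \begin{equation*} \liminf_{\delta\to0^+}\frac{p(1-s)}{G(\delta^{1-s})}\int_{B(x,\delta)}G\left(\frac{|u(x)-u(y)|}{|x-y|^{s}}\right)\frac{dy}{|x-y|^N}\ge K_{N,p}|\nabla u(x)|^{p}. \end{equation*}
   Context: An Orlicz function is a function $G:[0,\infty)\to[0,\infty)$ that is continuous, convex, increasing, with $G(0)=0$, satisfies $G(2t)\le \mathfrak{c}\,G(t)$ for all $t\ge0$ for some $\mathfrak{c}>2$, and $\lim_{t\to0^+}G(t)/t=0$. A positive measurable $F$ on $(0,\infty)$ is in $\mathcal{RV}_q(0)$ if $\lim_{t\to0^+}F(\lambda t)/F(t)=\lambda^q$ for all $\lambda>0$; $q$ is its index. Hypothesis (H): $G\in\mathcal{RV}_p(0)$ is a piecewise smooth Orlicz function, $G'\in\mathcal{RV}_{p-1}(0)$, and writing $G(t)=t^p\ell(t)$, $\ell(t)\ge c_\ell>0$ for all $t>0$. $K_{N,p}=\int_{\mathbb{S}^{N-1}}|w\cdot e|^p\,d\sigma(w)$ for any unit vector $e$. *)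

theory Defs
  imports "HOL-Analysis.Analysis"
begin

definition orlicz :: "(real \<Rightarrow> real) \<Rightarrow> bool" where
  "orlicz G \<longleftrightarrow>
     (\<forall>t\<ge>0. G t \<ge> 0) \<and>
     continuous_on {0..} G \<and>
     convex_on {0..} G \<and>
     mono_on {0..} G \<and>
     G 0 = 0 \<and>
     (\<exists>c>2. \<forall>t\<ge>0. G (2 * t) \<le> c * G t) \<and>
     ((\<lambda>t. G t / t) \<longlongrightarrow> 0) (at_right 0)"

definition regvar0 :: "real \<Rightarrow> (real \<Rightarrow> real) \<Rightarrow> bool" where
  "regvar0 q F \<longleftrightarrow>
     (\<forall>t>0. F t > 0) \<and>
     F \<in> borel_measurable (restrict_space lborel {0<..}) \<and>
     (\<forall>lam>0. ((\<lambda>t. F (lam * t) / F t) \<longlongrightarrow> lam powr q) (at_right 0))"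

definition hypH :: "(real \<Rightarrow> real) \<Rightarrow> real \<Rightarrow> bool" where
  "hypH G p \<longleftrightarrow>
     orlicz G \<and>
     regvar0 p G \<and>
     G piecewise_C1_differentiable_on {0<..} \<and>
     (\<exists>G' S. finite S \<and>
        (\<forall>t\<in>{0<..} - S. (G has_real_derivative G' t) (at t)) \<and>
        regvar0 (p - 1) G') \<and>
     (\<exists>c\<^sub>l>0. \<forall>t>0. G t / t powr p \<ge> c\<^sub>l)"

text \<open>Surface measure on the unit sphere S^{N-1}, defined (standardly) as the cone measure:
  sigma(A) = N * Lebesgue measure of {r w : 0 < r <= 1, w in A}.\<close>
definition sphere_measure :: "'a::euclidean_space measure" where
  "sphere_measure = measure_of (sphere 0 1) (sets (restrict_space lborel (sphere 0 1)))
     (\<lambda>A. ennreal (real DIM('a)) *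
            emeasure lborel {r *\<^sub>R w | r w. 0 < r \<and> r \<le> 1 \<and> w \<in> A})"

definition K_const :: "'a::euclidean_space itself \<Rightarrow> real \<Rightarrow> real" where
  "K_const _ p = (let e = (SOME b. b \<in> (Basis :: 'a set)) in
      integral\<^sup>L (sphere_measure :: 'a measure) (\<lambda>w. \<bar>w \<bullet> e\<bar> powr p))"

end

(* Substituting y = x + delta z turns the quotient into an integral over the unit ball with integrand
   beta / G(t) * G(t * lambda_delta(z)) / |z|^N, where beta = p(1 - s), t = delta^(1-s) and
   lambda_delta(z) -> |grad u(x) . z| / |z|^s. As G is increasing and regularly varying with index p,
   the integrand has lower limit beta (|grad u(x) . z| / |z|^s)^p / |z|^N, and Fatou's lemma bounds the
   liminf from below by the integral of this limit over the unit ball.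
   That integral is at least |grad u(x)|^p K_{N,p}: the surface measure is the cone measure, a reflection
   moves the direction of grad u(x) to the basis vector used in K_const, and the radial weight
   beta r^(beta - N) integrates against a 0-homogeneous function to N times its integral over the ball,
   which is shown without polar coordinates by comparing the unit ball with concentric smaller balls. *)

theory Submission
  imports Defs
begin

section \<open>Rotation invariance of Lebesgue measure\<close>

(* The library proves rotation invariance of Lebesgue measure only on real^'n with a well-ordered
   finite index type, so an abstract Euclidean space is given coordinates indexed by its basis. *)

typedef (overloaded) ('a::euclidean_space) basis_index = "Basis :: 'a set"
  using nonempty_Basis by blast

instance basis_index :: (euclidean_space) finite
proof
  show "finite (UNIV :: 'a basis_index set)"
    by (metis finite_Basis finite_imageI type_definition.Abs_image type_definition_basis_index)
qed

instantiation basis_index :: (euclidean_space) linorder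
begin

definition less_eq_basis_index :: "'a basis_index \<Rightarrow> 'a basis_index \<Rightarrow> bool"
  where "less_eq_basis_index i j \<longleftrightarrow> to_nat i \<le> to_nat j"

definition less_basis_index :: "'a basis_index \<Rightarrow> 'a basis_index \<Rightarrow> bool"
  where "less_basis_index i j \<longleftrightarrow> to_nat i < to_nat j"

instance
proof
  fix i j k :: "'a basis_index"
  show "i < j \<longleftrightarrow> i \<le> j \<and> \<not> j \<le> i"
    by (auto simp: less_eq_basis_index_def less_basis_index_def)
  show "i \<le> i"
    by (simp add: less_eq_basis_index_def)
  show "i \<le> j \<Longrightarrow> j \<le> k \<Longrightarrow> i \<le> k"
    by (simp add: less_eq_basis_index_def)
  show "i \<le> j \<Longrightarrow> j \<le> i \<Longrightarrow> i = j"
    by (simp add: less_eq_basis_index_def inj_eq[OF inj_to_nat])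
  show "i \<le> j \<or> j \<le> i"
    by (auto simp: less_eq_basis_index_def)
qed

end

instance basis_index :: (euclidean_space) wellorder
proof
  fix P :: "'a basis_index \<Rightarrow> bool" and i
  assume step: "\<And>i. (\<And>j. j < i \<Longrightarrow> P j) \<Longrightarrow> P i"
  show "P i"
    by (induct i rule: measure_induct_rule[where f = to_nat]) (rule step, simp add: less_basis_index_def)
qed

lemma borel_measurable_linear:
  fixes f :: "'a::euclidean_space \<Rightarrow> 'b::euclidean_space"
  shows "linear f \<Longrightarrow> f \<in> borel_measurable borel"
  by (simp add: borel_measurable_continuous_onI linear_continuous_on linear_conv_bounded_linear)

definition vec_of :: "'a::euclidean_space \<Rightarrow> real^'a basis_index"
  where "vec_of z = (\<chi> i. z \<bullet> Rep_basis_index i)"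

definition of_vec :: "real^'a basis_index \<Rightarrow> 'a::euclidean_space"
  where "of_vec v = (\<Sum>i\<in>UNIV. v $ i *\<^sub>R Rep_basis_index i)"

lemma sum_basis_index:
  "(\<Sum>i\<in>UNIV. f (Rep_basis_index i)) = (\<Sum>b\<in>(Basis :: 'a::euclidean_space set). f b)"
proof -
  have "(\<Sum>b\<in>(Basis :: 'a set). f b) = (\<Sum>b\<in>range Rep_basis_index. f b)"
    by (simp add: type_definition.Rep_range[OF type_definition_basis_index])
  then show ?thesis
    by (simp add: sum.reindex inj_on_def Rep_basis_index_inject)
qed

lemma prod_basis_index:
  "(\<Prod>i\<in>UNIV. f (Rep_basis_index i)) = (\<Prod>b\<in>(Basis :: 'a::euclidean_space set). f b)"
proof -
  have "(\<Prod>b\<in>(Basis :: 'a set). f b) = (\<Prod>b\<in>range Rep_basis_index. f b)"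
    by (simp add: type_definition.Rep_range[OF type_definition_basis_index])
  then show ?thesis
    by (simp add: prod.reindex inj_on_def Rep_basis_index_inject)
qed

lemma inner_Rep_basis_index:
  "Rep_basis_index i \<bullet> Rep_basis_index j = (if i = j then 1 else 0)"
  using Rep_basis_index[of i] Rep_basis_index[of j] Rep_basis_index_inject[of i j]
  by (auto simp: inner_Basis)

lemma inner_of_vec_Rep_basis_index: "of_vec v \<bullet> Rep_basis_index i = v $ i"
  by (simp add: of_vec_def inner_sum_left inner_Rep_basis_index if_distrib cong: if_cong)

lemma vec_of_of_vec [simp]: "vec_of (of_vec v) = v"
  by (simp add: vec_of_def vec_eq_iff inner_of_vec_Rep_basis_index)

lemma of_vec_vec_of [simp]: "of_vec (vec_of z) = z"
  using sum_basis_index[of "\<lambda>b. (z \<bullet> b) *\<^sub>R b"]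
  by (simp add: of_vec_def vec_of_def euclidean_representation)

lemma inner_vec_of: "vec_of z \<bullet> vec_of w = z \<bullet> w"
proof -
  have "vec_of z \<bullet> vec_of w = (\<Sum>i\<in>UNIV. (z \<bullet> Rep_basis_index i) * (w \<bullet> Rep_basis_index i))"
    by (simp add: vec_of_def inner_vec_def)
  also have "\<dots> = z \<bullet> w"
    by (simp add: sum_basis_index[of "\<lambda>b. (z \<bullet> b) * (w \<bullet> b)"] euclidean_inner[of z w])
  finally show ?thesis .
qed

lemma linear_vec_of: "linear vec_of"
  by (simp add: linear_iff vec_of_def vec_eq_iff inner_add_left)

lemma linear_of_vec: "linear of_vec"
  by (simp add: linear_iff of_vec_def scaleR_add_left sum.distrib scaleR_sum_right)

lemma inner_of_vec: "of_vec v \<bullet> of_vec w = v \<bullet> w"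
  using inner_vec_of[of "of_vec v" "of_vec w"] by simp

lemma measurable_of_vec [measurable]: "of_vec \<in> borel_measurable borel"
  by (rule borel_measurable_linear[OF linear_of_vec])

lemma vimage_of_vec_box: "of_vec -` box l u = box (vec_of l) (vec_of u)"
proof -
  have "of_vec v \<in> box l u \<longleftrightarrow> v \<in> box (vec_of l) (vec_of u)" for v
  proof -
    have "of_vec v \<in> box l u \<longleftrightarrow>
        (\<forall>i. l \<bullet> Rep_basis_index i < of_vec v \<bullet> Rep_basis_index i \<and>
             of_vec v \<bullet> Rep_basis_index i < u \<bullet> Rep_basis_index i)"
      by (metis Rep_basis_index Rep_basis_index_cases mem_box(1))
    also have "\<dots> \<longleftrightarrow> v \<in> box (vec_of l) (vec_of u)"
      by (simp add: mem_box_cart vec_of_def inner_of_vec_Rep_basis_index)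
    finally show ?thesis .
  qed
  then show ?thesis by auto
qed

lemma prod_Basis_cart:
  "(\<Prod>b\<in>(Basis :: (real^'n::finite) set). f b) = (\<Prod>i\<in>UNIV. f (axis i 1))"
  by (simp add: Basis_vec_def UNION_singleton_eq_range prod.reindex inj_on_def axis_eq_axis)

lemma distr_lborel_of_vec: "distr lborel borel of_vec = (lborel :: 'a::euclidean_space measure)"
proof (rule lborel_eqI[symmetric])
  fix l u :: 'a
  assume "\<And>b. b \<in> Basis \<Longrightarrow> l \<bullet> b \<le> u \<bullet> b"
  then have "\<And>b. b \<in> Basis \<Longrightarrow> vec_of l \<bullet> b \<le> vec_of u \<bullet> b"
    by (auto simp: Basis_vec_def vec_of_def inner_axis Rep_basis_index)
  then have "emeasure (distr lborel borel of_vec) (box l u) = (\<Prod>i\<in>UNIV. (u - l) \<bullet> Rep_basis_index i)"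
    by (simp add: emeasure_distr vimage_of_vec_box emeasure_lborel_box_eq prod_Basis_cart
        vec_of_def inner_axis inner_diff_left)
  then show "emeasure (distr lborel borel of_vec) (box l u) = (\<Prod>b\<in>Basis. (u - l) \<bullet> b)"
    by (simp add: prod_basis_index)
qed simp

lemma distr_lborel_orthogonal_transformation_cart:
  fixes T :: "(real, 'n::{finite,wellorder}) vec \<Rightarrow> (real, 'n) vec"
  assumes T: "orthogonal_transformation T"
  shows "distr lborel borel T = lborel"
proof (rule lborel_eqI[symmetric])
  have Tm: "T \<in> borel_measurable borel"
    using T by (intro borel_measurable_linear orthogonal_transformation_linear)
  have T': "orthogonal_transformation (inv T)"
    using T by (rule orthogonal_transformation_inv)
  fix l u :: "(real, 'n) vec"
  assume le: "\<And>b. b \<in> Basis \<Longrightarrow> l \<bullet> b \<le> u \<bullet> b"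
  have pre: "T -` box l u = inv T ` box l u"
    using orthogonal_transformation_bij[OF T] by (simp add: bij_vimage_eq_inv_image)
  have "T -` box l u \<in> sets borel"
    using measurable_sets_borel[OF Tm] by simp
  then have "emeasure (distr lborel borel T) (box l u) = emeasure lebesgue (inv T ` box l u)"
    using Tm by (simp add: emeasure_distr emeasure_completion pre)
  also have "\<dots> = measure lebesgue (box l u)"
    using measurable_orthogonal_image[OF T', of "box l u"] measure_orthogonal_image[OF T', of "box l u"]
    by (simp add: emeasure_eq_measure2)
  also have "\<dots> = emeasure lborel (box l u)"
    by (simp add: emeasure_eq_measure2 emeasure_completion)
  finally show "emeasure (distr lborel borel T) (box l u) = (\<Prod>b\<in>Basis. (u - l) \<bullet> b)"
    using le by (simp add: emeasure_lborel_box_eq)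
qed simp

lemma distr_lborel_orthogonal_transformation:
  fixes T :: "'a::euclidean_space \<Rightarrow> 'a"
  assumes T: "orthogonal_transformation T"
  shows "distr lborel borel T = lborel"
proof -
  define T' where "T' = vec_of \<circ> T \<circ> of_vec"
  have "linear T'"
    unfolding T'_def using T linear_of_vec linear_vec_of
    by (intro linear_compose) (auto simp: orthogonal_transformation_linear)
  moreover have "T' v \<bullet> T' w = v \<bullet> w" for v w
    using T by (simp add: T'_def inner_vec_of inner_of_vec orthogonal_transformation_def)
  ultimately have T': "orthogonal_transformation T'"
    by (simp add: orthogonal_transformation_def)
  have Tm: "T \<in> borel_measurable borel" and T'm: "T' \<in> borel_measurable borel"
    using T T' by (auto intro!: borel_measurable_linear orthogonal_transformation_linear)
  have "distr lborel borel T = distr (distr lborel borel of_vec) borel T"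
    by (simp only: distr_lborel_of_vec)
  also have "\<dots> = distr lborel borel (of_vec \<circ> T')"
    using Tm by (simp add: distr_distr T'_def comp_assoc[symmetric] o_def)
  also have "\<dots> = distr (distr lborel borel T') borel of_vec"
    using T'm by (simp add: distr_distr)
  also have "\<dots> = lborel"
    by (simp only: distr_lborel_orthogonal_transformation_cart[OF T'] distr_lborel_of_vec)
  finally show ?thesis .
qed

lemma nn_integral_lborel_orthogonal_transformation:
  fixes T :: "'a::euclidean_space \<Rightarrow> 'a"
  assumes T: "orthogonal_transformation T" and [measurable]: "f \<in> borel_measurable borel"
  shows "(\<integral>\<^sup>+ z. f (T z) \<partial>lborel) = (\<integral>\<^sup>+ z. f z \<partial>lborel)"
proof -
  have [measurable]: "T \<in> borel_measurable borel"
    using T by (intro borel_measurable_linear orthogonal_transformation_linear)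
  show ?thesis
    by (subst (2) distr_lborel_orthogonal_transformation[OF T, symmetric]) (simp add: nn_integral_distr)
qed

lemma orthogonal_transformation_exists_reflection:
  fixes v w :: "'a::real_inner"
  assumes "norm v = norm w"
  obtains T where "orthogonal_transformation T" "T v = w"
proof (cases "v = w")
  case True
  then show ?thesis using that orthogonal_transformation_id by blast
next
  case False
  define r where "r = v - w"
  define T where "T z = z - (2 * (r \<bullet> z) / (r \<bullet> r)) *\<^sub>R r" for z
  have rr: "r \<bullet> r \<noteq> 0" using False by (simp add: r_def)
  have "v \<bullet> v = w \<bullet> w"
    using assms by (simp add: power2_norm_eq_inner[symmetric])
  then have "2 * (r \<bullet> v) = r \<bullet> r"
    by (simp add: r_def inner_diff_left inner_diff_right inner_commute)
  then have "T v = w"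
    using rr by (simp add: T_def r_def)
  moreover have "linear T"
    by (simp add: linear_iff T_def inner_add_right add_divide_distrib scaleR_add_left algebra_simps)
  moreover have "T y \<bullet> T z = y \<bullet> z" for y z
    using rr by (simp add: T_def inner_diff_left inner_diff_right inner_commute power2_eq_square field_simps)
  ultimately show ?thesis
    using that unfolding orthogonal_transformation_def by blast
qed

section \<open>The surface measure as a cone measure\<close>

lemma sphere_null_sets_lborel: "sphere (0::'a::euclidean_space) r \<in> null_sets lborel"
  using negligible_sphere[of "0::'a" r]
  by (auto simp: null_sets_completion_iff negligible_iff_null_sets)

lemma cone_eq_radial_projection_vimage:
  fixes \<nu> :: "'a::real_normed_vector \<Rightarrow> 'a"
  assumes \<nu>_sgn: "\<And>z. z \<noteq> 0 \<Longrightarrow> \<nu> z = sgn z" and "A \<subseteq> sphere 0 1"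
  shows "{z. norm z \<in> {0<..1} \<and> \<nu> z \<in> A} = {r *\<^sub>R w | r w. 0 < r \<and> r \<le> 1 \<and> w \<in> A}"
proof (intro equalityI subsetI)
  fix z assume "z \<in> {z. norm z \<in> {0<..1} \<and> \<nu> z \<in> A}"
  then show "z \<in> {r *\<^sub>R w | r w. 0 < r \<and> r \<le> 1 \<and> w \<in> A}"
    using \<nu>_sgn[of z] by (intro CollectI exI[of _ "norm z"] exI[of _ "sgn z"]) (auto simp: sgn_div_norm)
next
  fix z assume "z \<in> {r *\<^sub>R w | r w. 0 < r \<and> r \<le> 1 \<and> w \<in> A}"
  then obtain r w where "z = r *\<^sub>R w" "0 < r" "r \<le> 1" "w \<in> A"
    by blast
  moreover from \<open>w \<in> A\<close> have "norm w = 1" "w \<noteq> 0"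
    using assms(2) by auto
  ultimately show "z \<in> {z. norm z \<in> {0<..1} \<and> \<nu> z \<in> A}"
    using \<nu>_sgn[of z] by (auto simp: sgn_scaleR sgn_div_norm)
qed

lemma emeasure_distr_radial_projection:
  fixes \<nu> :: "'a::euclidean_space \<Rightarrow> 'a"
  defines "D \<equiv> density lborel (\<lambda>z. ennreal (real DIM('a)) * indicator {0<..1} (norm z))"
  assumes \<nu>m: "\<nu> \<in> measurable D (restrict_space lborel (sphere 0 1))"
    and \<nu>_sgn: "\<And>z. z \<noteq> 0 \<Longrightarrow> \<nu> z = sgn z" and A: "A \<in> sets (restrict_space lborel (sphere 0 1))"
  shows "emeasure (distr D (restrict_space lborel (sphere 0 1)) \<nu>) A =
    ennreal (real DIM('a)) * emeasure lborel {r *\<^sub>R w | r w. 0 < r \<and> r \<le> 1 \<and> w \<in> A}"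
proof -
  have pre: "\<nu> -` A \<in> sets borel"
    using \<nu>m A by (simp add: measurable_def D_def)
  moreover have "{z. norm z \<in> {0<..1}} \<in> sets (borel :: 'a measure)"
    by measurable
  ultimately have cone: "{z. norm z \<in> {0<..1} \<and> \<nu> z \<in> A} \<in> sets borel"
    by (simp add: Collect_conj_eq Int_def[symmetric] vimage_def)
  then have "emeasure (distr D (restrict_space lborel (sphere 0 1)) \<nu>) A =
      (\<integral>\<^sup>+ z. ennreal (real DIM('a)) * indicator {z. norm z \<in> {0<..1} \<and> \<nu> z \<in> A} z \<partial>lborel)"
    using \<nu>m A pre by (auto simp: D_def emeasure_distr emeasure_density intro!: nn_integral_cong
        split: split_indicator)
  also have "\<dots> = ennreal (real DIM('a)) * emeasure lborel {z. norm z \<in> {0<..1} \<and> \<nu> z \<in> A}"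
    using cone by (simp add: nn_integral_cmult_indicator)
  also have "{z. norm z \<in> {0<..1} \<and> \<nu> z \<in> A} = {r *\<^sub>R w | r w. 0 < r \<and> r \<le> 1 \<and> w \<in> A}"
    using sets.sets_into_space[OF A] space_restrict_space[of lborel "sphere 0 1"]
    by (intro cone_eq_radial_projection_vimage[OF \<nu>_sgn]) auto
  finally show ?thesis .
qed

lemma sphere_measure_eq_distr:
  fixes \<nu> :: "'a::euclidean_space \<Rightarrow> 'a"
  assumes [measurable]: "\<nu> \<in> borel_measurable borel"
    and \<nu>_sphere: "\<And>z. \<nu> z \<in> sphere 0 1" and \<nu>_sgn: "\<And>z. z \<noteq> 0 \<Longrightarrow> \<nu> z = sgn z"
  shows "sphere_measure = distr (density lborel (\<lambda>z. ennreal (real DIM('a)) * indicator {0<..1} (norm z)))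
      (restrict_space lborel (sphere 0 1)) \<nu>" (is "_ = distr ?D ?S \<nu>")
proof -
  have \<nu>m: "\<nu> \<in> measurable ?D ?S"
    by (rule measurable_restrict_space2) (use \<nu>_sphere in auto)
  have space_S: "space ?S = sphere 0 1"
    by (simp add: space_restrict_space)
  have "sphere_measure = measure_of (sphere 0 1) (sets ?S) (emeasure (distr ?D ?S \<nu>))"
    unfolding sphere_measure_def
  proof (rule measure_of_eq)
    show "sets ?S \<subseteq> Pow (sphere 0 1)"
      using sets.space_closed[of ?S] space_S by simp
    fix A assume "A \<in> sigma_sets (sphere 0 1) (sets ?S)"
    then have "A \<in> sets ?S"
      using sets.sigma_sets_eq[of ?S] space_S by simp
    then show "ennreal (real DIM('a)) * emeasure lborel {r *\<^sub>R w | r w. 0 < r \<and> r \<le> 1 \<and> w \<in> A} =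
        emeasure (distr ?D ?S \<nu>) A"
      using emeasure_distr_radial_projection[OF \<nu>m \<nu>_sgn] by simp
  qed
  also have "\<dots> = distr ?D ?S \<nu>"
    using measure_of_of_measure[of "distr ?D ?S \<nu>"] by (simp add: space_restrict_space)
  finally show ?thesis .
qed

lemma nn_integral_sphere_measure:
  fixes h :: "'a::euclidean_space \<Rightarrow> ennreal"
  assumes [measurable]: "h \<in> borel_measurable borel"
  shows "(\<integral>\<^sup>+ w. h w \<partial>sphere_measure) = ennreal (real DIM('a)) * (\<integral>\<^sup>+ z \<in> ball 0 1. h (sgn z) \<partial>lborel)"
proof -
  obtain e :: 'a where "e \<in> Basis"
    using nonempty_Basis by blast
  define \<nu> where "\<nu> z = (if z = 0 then e else sgn z)" for z
  have [measurable]: "\<nu> \<in> borel_measurable borel"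
    unfolding \<nu>_def by measurable
  have \<nu>: "\<nu> z \<in> sphere 0 1" "z \<noteq> 0 \<Longrightarrow> \<nu> z = sgn z" for z
    using \<open>e \<in> Basis\<close> by (auto simp: \<nu>_def norm_sgn)
  have "h \<in> borel_measurable (restrict_space lborel (sphere 0 1))"
    by (rule measurable_restrict_space1) simp
  then have "(\<integral>\<^sup>+ w. h w \<partial>sphere_measure) =
      (\<integral>\<^sup>+ z. h (\<nu> z) \<partial>density lborel (\<lambda>z. ennreal (real DIM('a)) * indicator {0<..1} (norm z)))"
    using \<nu> by (simp add: sphere_measure_eq_distr[of \<nu>] nn_integral_distr measurable_restrict_space2)
  also have "\<dots> = (\<integral>\<^sup>+ z. ennreal (real DIM('a)) * (h (sgn z) * indicator {0<..1} (norm z)) \<partial>lborel)"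
    by (auto simp: nn_integral_density \<nu>(2) intro!: nn_integral_cong split: split_indicator)
  also have "\<dots> = ennreal (real DIM('a)) * (\<integral>\<^sup>+ z. h (sgn z) * indicator {0<..1} (norm z) \<partial>lborel)"
    by (simp add: nn_integral_cmult)
  also have "(\<integral>\<^sup>+ z. h (sgn z) * indicator {0<..1} (norm z) \<partial>lborel) = (\<integral>\<^sup>+ z \<in> ball 0 1. h (sgn z) \<partial>lborel)"
  proof (intro nn_integral_cong_AE)
    show "AE z in lborel. h (sgn z) * indicator {0<..1} (norm z) = h (sgn z) * indicator (ball 0 1) z"
      using AE_not_in[OF sphere_null_sets_lborel[of 0]] AE_not_in[OF sphere_null_sets_lborel[of 1]]
      by eventually_elim (auto split: split_indicator)
  qed
  finally show ?thesis .
qed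

section \<open>Homogeneous integrals over the unit ball\<close>

lemma sets_borel_ball [measurable]: "ball x r \<in> sets borel"
  by (simp add: borel_open)

lemma nn_integral_lborel_affine:
  fixes f :: "'a::euclidean_space \<Rightarrow> ennreal"
  assumes [measurable]: "f \<in> borel_measurable borel" and "0 < c"
  shows "(\<integral>\<^sup>+ y. f y \<partial>lborel) = ennreal (c ^ DIM('a)) * (\<integral>\<^sup>+ z. f (t + c *\<^sub>R z) \<partial>lborel)"
proof -
  have "(\<integral>\<^sup>+ y. f y \<partial>lborel) =
      (\<integral>\<^sup>+ y. f y \<partial>density (distr lborel borel (\<lambda>z. t + c *\<^sub>R z)) (\<lambda>_. ennreal (\<bar>c\<bar> ^ DIM('a))))"
    using lborel_affine[of c t] \<open>0 < c\<close> by simp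
  also have "\<dots> = (\<integral>\<^sup>+ z. ennreal (c ^ DIM('a)) * f (t + c *\<^sub>R z) \<partial>lborel)"
    using \<open>0 < c\<close> by (simp add: nn_integral_density nn_integral_distr)
  finally show ?thesis
    by (simp add: nn_integral_cmult)
qed

lemma nn_integral_ball_affine:
  fixes f :: "'a::euclidean_space \<Rightarrow> ennreal"
  assumes [measurable]: "f \<in> borel_measurable borel" and "0 < \<delta>"
  shows "(\<integral>\<^sup>+ y \<in> ball x \<delta>. f y \<partial>lborel) =
    ennreal (\<delta> ^ DIM('a)) * (\<integral>\<^sup>+ z \<in> ball 0 1. f (x + \<delta> *\<^sub>R z) \<partial>lborel)"
proof -
  have "indicator (ball x \<delta>) (x + \<delta> *\<^sub>R z) = (indicator (ball 0 1) z :: ennreal)" for z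
    using \<open>0 < \<delta>\<close> by (simp add: indicator_def dist_norm)
  then show ?thesis
    using nn_integral_lborel_affine[of "\<lambda>y. f y * indicator (ball x \<delta>) y" \<delta> x] \<open>0 < \<delta>\<close> by simp
qed

lemma nn_integral_ball_homogeneous:
  fixes f :: "'a::euclidean_space \<Rightarrow> ennreal"
  assumes [measurable]: "f \<in> borel_measurable borel"
    and hom: "\<And>c z. 0 < c \<Longrightarrow> f (c *\<^sub>R z) = ennreal (c powr k) * f z" and "0 < q"
  shows "(\<integral>\<^sup>+ z \<in> ball 0 q. f z \<partial>lborel) = ennreal (q powr (k + real DIM('a))) * (\<integral>\<^sup>+ z \<in> ball 0 1. f z \<partial>lborel)"
proof -
  have "(\<integral>\<^sup>+ z \<in> ball 0 q. f z \<partial>lborel) = ennreal (q ^ DIM('a)) * (\<integral>\<^sup>+ z \<in> ball 0 1. ennreal (q powr k) * f z \<partial>lborel)"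
    using \<open>0 < q\<close> by (simp add: nn_integral_ball_affine hom mult.assoc)
  also have "(\<integral>\<^sup>+ z \<in> ball 0 1. ennreal (q powr k) * f z \<partial>lborel) =
      ennreal (q powr k) * (\<integral>\<^sup>+ z \<in> ball 0 1. f z \<partial>lborel)"
    by (simp add: mult.assoc nn_integral_cmult)
  also have "ennreal (q ^ DIM('a)) * (ennreal (q powr k) * (\<integral>\<^sup>+ z \<in> ball 0 1. f z \<partial>lborel)) =
      ennreal (q powr (k + real DIM('a))) * (\<integral>\<^sup>+ z \<in> ball 0 1. f z \<partial>lborel)"
    using \<open>0 < q\<close> by (simp add: powr_add powr_realpow ennreal_mult' ac_simps)
  finally show ?thesis .
qed

lemma tendsto_annulus_ratio:
  fixes \<gamma> :: real and n :: nat
  assumes "0 < \<gamma>"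
  shows "((\<lambda>q. \<gamma> * q powr \<gamma> * (1 - q ^ n) / (1 - q powr \<gamma>)) \<longlongrightarrow> real n) (at_left 1)"
proof -
  have "((\<lambda>q. (q ^ n - 1) / (q - 1)) \<longlongrightarrow> real n) (at 1)"
    using DERIV_pow[of n 1] by (simp add: has_field_derivative_iff)
  moreover have "((\<lambda>q. (q powr \<gamma> - 1) / (q - 1)) \<longlongrightarrow> \<gamma>) (at 1)"
    using has_real_derivative_powr[of 1 \<gamma>] by (simp add: has_field_derivative_iff)
  moreover have "((\<lambda>q. q powr \<gamma>) \<longlongrightarrow> 1) (at (1::real))"
    by (rule tendsto_eq_intros) auto
  ultimately have lim: "((\<lambda>q. \<gamma> * q powr \<gamma> * ((q ^ n - 1) / (q - 1)) / ((q powr \<gamma> - 1) / (q - 1))) \<longlongrightarrow>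
      \<gamma> * 1 * real n / \<gamma>) (at 1)"
    using \<open>0 < \<gamma>\<close> by (intro tendsto_intros) auto
  have eq: "\<gamma> * q powr \<gamma> * ((q ^ n - 1) / (q - 1)) / ((q powr \<gamma> - 1) / (q - 1)) =
      \<gamma> * q powr \<gamma> * (1 - q ^ n) / (1 - q powr \<gamma>)" if "q \<noteq> 1" for q :: real
  proof -
    have cancel: "A / (q - 1) / (B / (q - 1)) = A / B" for A B :: real
      using that by (cases "B = 0") (simp_all add: field_simps)
    have "(q ^ n - 1) / (q - 1) / ((q powr \<gamma> - 1) / (q - 1)) = (q ^ n - 1) / (q powr \<gamma> - 1)"
      by (rule cancel)
    also have "\<dots> = (1 - q ^ n) / (1 - q powr \<gamma>)"
      by (metis minus_diff_eq minus_divide_divide)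
    finally show ?thesis
      by (metis times_divide_eq_right)
  qed
  have "\<forall>\<^sub>F q in at 1. \<gamma> * q powr \<gamma> * ((q ^ n - 1) / (q - 1)) / ((q powr \<gamma> - 1) / (q - 1)) =
      \<gamma> * q powr \<gamma> * (1 - q ^ n) / (1 - q powr \<gamma>)"
    by (rule eventually_mono[OF eventually_neq_at_within eq])
  then have "((\<lambda>q. \<gamma> * q powr \<gamma> * (1 - q ^ n) / (1 - q powr \<gamma>)) \<longlongrightarrow> real n) (at 1)"
    using lim \<open>0 < \<gamma>\<close> by (simp add: tendsto_cong)
  then show ?thesis
    by (rule filterlim_mono[OF _ order_refl at_le]) simp
qed

lemma ennreal_self_similar_split:
  assumes "ennreal x = S + ennreal c * ennreal x" "0 \<le> x" "0 \<le> c"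
  shows "S = ennreal ((1 - c) * x)"
proof -
  have "S \<noteq> \<infinity>"
  proof
    assume "S = \<infinity>"
    with assms(1) show False by simp
  qed
  then obtain s where s: "S = ennreal s" "0 \<le> s"
    by (cases S) auto
  then have "x = s + c * x"
    using assms by (simp add: ennreal_mult[symmetric] ennreal_plus[symmetric] del: ennreal_plus)
  then show ?thesis
    using s by (simp add: algebra_simps)
qed

lemma nn_integral_annulus_homogeneous:
  fixes f :: "'a::euclidean_space \<Rightarrow> ennreal"
  assumes [measurable]: "f \<in> borel_measurable borel"
    and hom: "\<And>c z. 0 < c \<Longrightarrow> f (c *\<^sub>R z) = ennreal (c powr k) * f z"
    and "0 < q" "q < 1" and I: "(\<integral>\<^sup>+ z \<in> ball 0 1. f z \<partial>lborel) = ennreal I" "0 \<le> I"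
  shows "(\<integral>\<^sup>+ z \<in> ball 0 1 - ball 0 q. f z \<partial>lborel) = ennreal ((1 - q powr (k + real DIM('a))) * I)"
proof -
  have "(\<integral>\<^sup>+ z \<in> ball 0 1. f z \<partial>lborel) =
      (\<integral>\<^sup>+ z \<in> ball 0 1 - ball 0 q. f z \<partial>lborel) + (\<integral>\<^sup>+ z \<in> ball 0 q. f z \<partial>lborel)"
    using \<open>q < 1\<close> by (subst nn_integral_add[symmetric]) (auto intro!: nn_integral_cong split: split_indicator)
  then show ?thesis
    using nn_integral_ball_homogeneous[OF assms(1) hom \<open>0 < q\<close>] I by (intro ennreal_self_similar_split) simp_all
qed

(* In place of polar coordinates: by homogeneity, the annulus between radii q and 1 carries the
   fractions 1 - q^N and 1 - q^gamma of the two integrals, while the weight on it is at least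
   gamma q^gamma; the resulting ratio tends to N as q -> 1. *)
lemma nn_integral_ball_radial_power_annulus:
  fixes \<psi> :: "'a::euclidean_space \<Rightarrow> ennreal"
  assumes [measurable]: "\<psi> \<in> borel_measurable borel" and hom: "\<And>c z. 0 < c \<Longrightarrow> \<psi> (c *\<^sub>R z) = \<psi> z"
    and "0 < \<gamma>" and q: "0 < q" "q < 1"
    and J: "(\<integral>\<^sup>+ z \<in> ball 0 1. \<psi> z \<partial>lborel) = ennreal j" "0 \<le> j"
    and I: "(\<integral>\<^sup>+ z \<in> ball 0 1. ennreal (\<gamma> * norm z powr (\<gamma> - real DIM('a))) * \<psi> z \<partial>lborel) = ennreal i" "0 \<le> i"
  shows "\<gamma> * q powr \<gamma> * (1 - q ^ DIM('a)) * j \<le> (1 - q powr \<gamma>) * i"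
proof -
  define F where "F z = ennreal (\<gamma> * norm z powr (\<gamma> - real DIM('a))) * \<psi> z" for z
  have [measurable]: "F \<in> borel_measurable borel"
    unfolding F_def by measurable
  have F_hom: "F (c *\<^sub>R z) = ennreal (c powr (\<gamma> - real DIM('a))) * F z" if "0 < c" for c z
  proof -
    have "ennreal (\<gamma> * (c * norm z) powr (\<gamma> - real DIM('a))) =
        ennreal (c powr (\<gamma> - real DIM('a))) * ennreal (\<gamma> * norm z powr (\<gamma> - real DIM('a)))"
      using that by (simp add: powr_mult mult.left_commute flip: ennreal_mult')
    then show ?thesis
      using that by (simp add: F_def hom mult.assoc)
  qed
  have "ennreal (\<gamma> * q powr \<gamma>) * \<psi> z * indicator (ball 0 1 - ball 0 q) z \<le> F z * indicator (ball 0 1 - ball 0 q) z" for z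
  proof (cases "z \<in> ball 0 1 - ball 0 q")
    case True
    then have "q powr \<gamma> \<le> norm z powr \<gamma>" "norm z powr \<gamma> \<le> norm z powr (\<gamma> - real DIM('a))"
      using \<open>0 < \<gamma>\<close> q by (auto intro!: powr_mono2 powr_mono')
    then show ?thesis
      using True \<open>0 < \<gamma>\<close> by (auto simp: F_def intro!: mult_right_mono ennreal_leI)
  qed simp
  then have "ennreal (\<gamma> * q powr \<gamma>) * (\<integral>\<^sup>+ z \<in> ball 0 1 - ball 0 q. \<psi> z \<partial>lborel) \<le>
      (\<integral>\<^sup>+ z \<in> ball 0 1 - ball 0 q. F z \<partial>lborel)"
    by (subst nn_integral_cmult[symmetric]) (auto simp: mult.assoc intro!: nn_integral_mono)
  also have "\<dots> = ennreal ((1 - q powr \<gamma>) * i)"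
    using nn_integral_annulus_homogeneous[of F, OF _ F_hom q] I by (simp add: F_def)
  finally have "ennreal (\<gamma> * q powr \<gamma> * (1 - q ^ DIM('a)) * j) \<le> ennreal ((1 - q powr \<gamma>) * i)"
    using nn_integral_annulus_homogeneous[of \<psi> 0, OF _ _ q] hom J \<open>0 < \<gamma>\<close> q
    by (simp add: powr_realpow ennreal_mult'[symmetric] mult.assoc)
  moreover have "0 \<le> (1 - q powr \<gamma>) * i"
    using powr01_less_one[of q \<gamma>] q \<open>0 < \<gamma>\<close> I by simp
  ultimately show ?thesis
    by simp
qed

lemma nn_integral_ball_radial_power_ge:
  fixes \<psi> :: "'a::euclidean_space \<Rightarrow> ennreal"
  assumes [measurable]: "\<psi> \<in> borel_measurable borel"
    and hom: "\<And>c z. 0 < c \<Longrightarrow> \<psi> (c *\<^sub>R z) = \<psi> z"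
    and fin: "(\<integral>\<^sup>+ z \<in> ball 0 1. \<psi> z \<partial>lborel) \<noteq> \<infinity>" and "0 < \<gamma>"
  shows "ennreal (real DIM('a)) * (\<integral>\<^sup>+ z \<in> ball 0 1. \<psi> z \<partial>lborel) \<le>
    (\<integral>\<^sup>+ z \<in> ball 0 1. ennreal (\<gamma> * norm z powr (\<gamma> - real DIM('a))) * \<psi> z \<partial>lborel)"
    (is "_ * ?J \<le> ?I")
proof (cases "?I = \<infinity>")
  case False
  obtain i where i: "?I = ennreal i" "0 \<le> i"
    using False by (cases ?I) auto
  obtain j where j: "?J = ennreal j" "0 \<le> j"
    using fin by (cases ?J) auto
  have "((\<lambda>q. \<gamma> * q powr \<gamma> * (1 - q ^ DIM('a)) / (1 - q powr \<gamma>) * j) \<longlongrightarrow> real DIM('a) * j) (at_left 1)"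
    using tendsto_annulus_ratio[OF \<open>0 < \<gamma>\<close>] by (intro tendsto_intros)
  moreover have "\<forall>\<^sub>F q in at_left 1. \<gamma> * q powr \<gamma> * (1 - q ^ DIM('a)) / (1 - q powr \<gamma>) * j \<le> i"
    using eventually_at_left_real[OF zero_less_one]
  proof (rule eventually_mono)
    fix q :: real assume "q \<in> {0<..<1}"
    then show "\<gamma> * q powr \<gamma> * (1 - q ^ DIM('a)) / (1 - q powr \<gamma>) * j \<le> i"
      using nn_integral_ball_radial_power_annulus[OF assms(1) hom \<open>0 < \<gamma>\<close> _ _ j i, of q]
        \<open>0 < \<gamma>\<close> powr01_less_one[of q \<gamma>] by (simp add: field_simps)
  qed
  ultimately have "real DIM('a) * j \<le> i"
    by (rule tendsto_le[OF trivial_limit_at_left_real tendsto_const])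
  then show ?thesis
    using i j by (simp add: ennreal_mult'[symmetric])
qed simp

(* Only an inequality: K_const is a Bochner integral, which vanishes for a non-integrable integrand. *)
lemma K_const_le_nn_integral_ball:
  fixes b :: "'a::euclidean_space"
  assumes "norm b = 1"
  shows "ennreal (K_const TYPE('a) p) \<le>
    ennreal (real DIM('a)) * (\<integral>\<^sup>+ z \<in> ball 0 1. ennreal (\<bar>b \<bullet> z\<bar> powr p / norm z powr p) \<partial>lborel)"
proof -
  define e :: 'a where "e = (SOME b. b \<in> Basis)"
  have "e \<in> Basis"
    unfolding e_def by (rule someI_ex) (use nonempty_Basis in blast)
  then obtain T where T: "orthogonal_transformation T" "T b = e"
    using assms orthogonal_transformation_exists_reflection[of b e] by auto
  have "ennreal (K_const TYPE('a) p) \<le> (\<integral>\<^sup>+ w. ennreal (\<bar>w \<bullet> e\<bar> powr p) \<partial>sphere_measure)"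
    unfolding K_const_def Let_def e_def[symmetric]
    by (cases "integrable sphere_measure (\<lambda>w::'a. \<bar>w \<bullet> e\<bar> powr p)")
      (simp_all add: nn_integral_eq_integral not_integrable_integral_eq)
  also have "\<dots> = ennreal (real DIM('a)) * (\<integral>\<^sup>+ z \<in> ball 0 1. ennreal (\<bar>e \<bullet> z\<bar> powr p / norm z powr p) \<partial>lborel)"
  proof -
    have "\<bar>sgn z \<bullet> e\<bar> = \<bar>e \<bullet> z\<bar> / norm z" for z
      by (simp add: sgn_div_norm abs_mult inner_commute divide_inverse_commute)
    then show ?thesis
      by (simp add: nn_integral_sphere_measure powr_divide)
  qed
  also have "(\<integral>\<^sup>+ z \<in> ball 0 1. ennreal (\<bar>e \<bullet> z\<bar> powr p / norm z powr p) \<partial>lborel) =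
      (\<integral>\<^sup>+ z \<in> ball 0 1. ennreal (\<bar>b \<bullet> z\<bar> powr p / norm z powr p) \<partial>lborel)"
  proof -
    have "indicator (ball 0 1) (T z) = (indicator (ball 0 1) z :: ennreal)" "T b \<bullet> T z = b \<bullet> z"
      "norm (T z) = norm z" for z
      using T(1) by (auto simp: orthogonal_transformation_def orthogonal_transformation_norm indicator_def)
    then show ?thesis
      using nn_integral_lborel_orthogonal_transformation[OF T(1),
          of "\<lambda>z. ennreal (\<bar>e \<bullet> z\<bar> powr p / norm z powr p) * indicator (ball 0 1) z"]
      by (simp add: T(2)[symmetric])
  qed
  finally show ?thesis .
qed

lemma nn_integral_ball_direction_ratio_finite:
  fixes b :: "'a::euclidean_space"
  assumes "norm b = 1" "0 < p"
  shows "(\<integral>\<^sup>+ z \<in> ball 0 1. ennreal (\<bar>b \<bullet> z\<bar> powr p / norm z powr p) \<partial>lborel) \<noteq> \<infinity>"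
proof -
  have "\<bar>b \<bullet> z\<bar> powr p \<le> norm z powr p" for z
    using Cauchy_Schwarz_ineq2[of b z] assms by (simp add: powr_mono2)
  then have "ennreal (\<bar>b \<bullet> z\<bar> powr p / norm z powr p) \<le> 1" for z
    by (cases "z = 0") (auto simp: divide_le_eq_1)
  then have "(\<integral>\<^sup>+ z \<in> ball 0 1. ennreal (\<bar>b \<bullet> z\<bar> powr p / norm z powr p) \<partial>lborel) \<le>
      (\<integral>\<^sup>+ z. indicator (ball (0::'a) 1) z \<partial>lborel)"
    by (intro nn_integral_mono) (simp split: split_indicator)
  then show ?thesis
    using emeasure_lborel_ball_finite[of "0::'a" 1] by (auto simp: top_unique)
qed

lemma powr_fractional_kernel_split:
  fixes A X r p s N :: real
  assumes "0 \<le> A" "0 \<le> X" "0 < r"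
  shows "A powr p * (p * (1 - s) * r powr (p * (1 - s) - N) * (X powr p / r powr p)) =
    p * (1 - s) * (A * X / r powr s) powr p / r powr N"
proof -
  have quotient: "(A * X / r powr s) powr p = A powr p * X powr p / r powr (s * p)"
    using assms by (simp add: powr_mult powr_divide powr_powr)
  have exponent: "r powr (p * (1 - s) - N) = r powr p / (r powr (s * p) * r powr N)"
    using assms by (simp add: powr_diff powr_add algebra_simps)
  show ?thesis
    unfolding quotient exponent using assms by (simp add: field_simps)
qed

lemma fractional_kernel_radial_factor:
  fixes a z :: "'a::euclidean_space"
  shows "ennreal (norm a powr p) * (ennreal (p * (1 - s) * norm z powr (p * (1 - s) - real DIM('a))) *
      ennreal (\<bar>sgn a \<bullet> z\<bar> powr p / norm z powr p)) =
    ennreal (p * (1 - s) * (\<bar>a \<bullet> z\<bar> / norm z powr s) powr p / norm z powr real DIM('a))"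
proof (cases "a = 0 \<or> z = 0")
  case False
  have "ennreal (norm a powr p) * (ennreal (p * (1 - s) * norm z powr (p * (1 - s) - real DIM('a))) *
      ennreal (\<bar>sgn a \<bullet> z\<bar> powr p / norm z powr p)) =
      ennreal (norm a powr p * (p * (1 - s) * norm z powr (p * (1 - s) - real DIM('a)) *
        (\<bar>sgn a \<bullet> z\<bar> powr p / norm z powr p)))"
    by (simp only: ennreal_mult'[symmetric] ennreal_mult''[symmetric] powr_ge_zero divide_nonneg_nonneg)
  also have "\<dots> = ennreal (p * (1 - s) * (norm a * \<bar>sgn a \<bullet> z\<bar> / norm z powr s) powr p / norm z powr real DIM('a))"
    by (subst powr_fractional_kernel_split) (use False in auto)
  also have "norm a * \<bar>sgn a \<bullet> z\<bar> = \<bar>a \<bullet> z\<bar>"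
    using False by (simp add: sgn_div_norm abs_mult)
  finally show ?thesis .
qed auto

lemma K_const_mult_le_nn_integral_ball:
  fixes a :: "'a::euclidean_space"
  assumes "0 < p" "s < 1"
  shows "ennreal (K_const TYPE('a) p * norm a powr p) \<le>
    (\<integral>\<^sup>+ z \<in> ball 0 1. ennreal (p * (1 - s) * (\<bar>a \<bullet> z\<bar> / norm z powr s) powr p / norm z powr real DIM('a)) \<partial>lborel)"
proof (cases "a = 0")
  case False
  define \<psi> where "\<psi> z = ennreal (\<bar>sgn a \<bullet> z\<bar> powr p / norm z powr p)" for z
  have "norm (sgn a) = 1"
    using False by (simp add: norm_sgn)
  have [measurable]: "\<psi> \<in> borel_measurable borel"
    unfolding \<psi>_def by measurable
  moreover have "\<psi> (c *\<^sub>R z) = \<psi> z" if "0 < c" for c z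
    using that by (simp add: \<psi>_def abs_mult powr_mult)
  moreover have "(\<integral>\<^sup>+ z \<in> ball 0 1. \<psi> z \<partial>lborel) \<noteq> \<infinity>"
    unfolding \<psi>_def using \<open>norm (sgn a) = 1\<close> \<open>0 < p\<close> by (rule nn_integral_ball_direction_ratio_finite)
  moreover have "0 < p * (1 - s)"
    using assms by simp
  ultimately have radial: "ennreal (real DIM('a)) * (\<integral>\<^sup>+ z \<in> ball 0 1. \<psi> z \<partial>lborel) \<le>
      (\<integral>\<^sup>+ z \<in> ball 0 1. ennreal (p * (1 - s) * norm z powr (p * (1 - s) - real DIM('a))) * \<psi> z \<partial>lborel)"
    by (rule nn_integral_ball_radial_power_ge)
  have "ennreal (K_const TYPE('a) p * norm a powr p) \<le>
      ennreal (norm a powr p) * (ennreal (real DIM('a)) * (\<integral>\<^sup>+ z \<in> ball 0 1. \<psi> z \<partial>lborel))"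
    using K_const_le_nn_integral_ball[OF \<open>norm (sgn a) = 1\<close>, of p]
    by (simp add: ennreal_mult'' mult.commute[of "ennreal (K_const _ _)"] \<psi>_def mult_left_mono)
  also have "\<dots> \<le> ennreal (norm a powr p) *
      (\<integral>\<^sup>+ z \<in> ball 0 1. ennreal (p * (1 - s) * norm z powr (p * (1 - s) - real DIM('a))) * \<psi> z \<partial>lborel)"
    by (rule mult_left_mono[OF radial]) simp
  also have "\<dots> = (\<integral>\<^sup>+ z \<in> ball 0 1.
      ennreal (p * (1 - s) * (\<bar>a \<bullet> z\<bar> / norm z powr s) powr p / norm z powr real DIM('a)) \<partial>lborel)"
  proof -
    have "ennreal (norm a powr p) * (ennreal (p * (1 - s) * norm z powr (p * (1 - s) - real DIM('a))) * \<psi> z) =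
        ennreal (p * (1 - s) * (\<bar>a \<bullet> z\<bar> / norm z powr s) powr p / norm z powr real DIM('a))" for z
      unfolding \<psi>_def by (rule fractional_kernel_radial_factor)
    then show ?thesis
      by (subst nn_integral_cmult[symmetric]) (auto intro!: nn_integral_cong simp flip: mult.assoc)
  qed
  finally show ?thesis .
qed simp

section \<open>Regular variation\<close>

lemma orlicz_tendsto_zero: "orlicz G \<Longrightarrow> (G \<longlongrightarrow> 0) (at_right 0)"
  unfolding orlicz_def continuous_on_def
  by (metis atLeast_iff greaterThan_iff less_imp_le order_refl subsetI tendsto_within_subset)

lemma power_lower_bound_exponent_pos:
  fixes G :: "real \<Rightarrow> real"
  assumes "(G \<longlongrightarrow> 0) (at_right 0)" and "0 < c" and bound: "\<And>t. 0 < t \<Longrightarrow> c \<le> G t / t powr p"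
  shows "0 < p"
proof (rule ccontr)
  assume "\<not> 0 < p"
  have "\<forall>\<^sub>F t in at_right 0. G t < c \<and> t \<in> {0<..<1::real}"
    using order_tendstoD(2)[OF assms(1,2)] eventually_at_right_real[OF zero_less_one]
    by eventually_elim auto
  then obtain t :: real where t: "G t < c" "0 < t" "t < 1"
    using eventually_happens'[OF trivial_limit_at_right_real] by auto
  then have "1 \<le> t powr p"
    using \<open>\<not> 0 < p\<close> powr_mono'[of p 0 t] by simp
  moreover have "c * t powr p \<le> G t"
    using bound[OF \<open>0 < t\<close>] \<open>0 < t\<close> by (simp add: pos_le_divide_eq)
  ultimately show False
    using t \<open>0 < c\<close> by (smt (verit) mult_le_cancel_left1)
qed

lemma hypH_index_pos: "hypH G p \<Longrightarrow> 0 < p"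
  unfolding hypH_def by (auto intro: power_lower_bound_exponent_pos orlicz_tendsto_zero)

lemma regvar_ratio_eventually_gt:
  fixes G :: "real \<Rightarrow> real" and F :: "'b filter"
  assumes mono: "mono_on {0..} G" and pos: "\<And>t. 0 < t \<Longrightarrow> 0 < G t"
    and rv: "\<And>l. 0 < l \<Longrightarrow> ((\<lambda>t. G (l * t) / G t) \<longlongrightarrow> l powr p) (at_right 0)"
    and t: "filterlim t (at_right 0) F" and lam: "(lam \<longlongrightarrow> L) F" and "0 < L" and "y < L powr p"
  shows "\<forall>\<^sub>F n in F. y < G (t n * lam n) / G (t n)"
proof -
  have lim: "((\<lambda>l. l powr p) \<longlongrightarrow> L powr p) (at_left L)"
    using \<open>0 < L\<close> by (intro tendsto_intros) auto
  have "\<forall>\<^sub>F l in at_left L. y < l powr p \<and> l \<in> {0<..<L}"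
    using order_tendstoD(1)[OF lim \<open>y < L powr p\<close>] eventually_at_left_real[OF \<open>0 < L\<close>]
    by eventually_elim auto
  then obtain l where l: "y < l powr p" "0 < l" "l < L"
    using eventually_happens'[OF trivial_limit_at_left_real] by auto
  have "\<forall>\<^sub>F n in F. l < lam n"
    using order_tendstoD(1)[OF lam \<open>l < L\<close>] .
  moreover have "\<forall>\<^sub>F n in F. y < G (l * t n) / G (t n)"
    using order_tendstoD(1)[OF filterlim_compose[OF rv[OF \<open>0 < l\<close>] t] \<open>y < l powr p\<close>] .
  moreover have "\<forall>\<^sub>F n in F. 0 < t n"
    using t by (auto simp: filterlim_at elim: eventually_mono)
  ultimately show ?thesis
  proof eventually_elim
    case (elim n)
    then have "G (l * t n) \<le> G (t n * lam n)"
      using \<open>0 < l\<close> by (intro mono_onD[OF mono]) (auto simp: mult.commute intro: mult_right_mono)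
    then show ?case
      using elim pos[of "t n"] by (smt (verit) divide_right_mono)
  qed
qed

lemma liminf_regvar_difference_quotient_ge:
  fixes G :: "real \<Rightarrow> real" and f d :: "nat \<Rightarrow> real"
  assumes mono: "mono_on {0..} G" and pos: "\<And>t. 0 < t \<Longrightarrow> 0 < G t"
    and rv: "\<And>l. 0 < l \<Longrightarrow> ((\<lambda>t. G (l * t) / G t) \<longlongrightarrow> l powr p) (at_right 0)"
    and "s < 1" and f: "\<And>n. 0 < f n" "f \<longlonglongrightarrow> 0"
    and d: "\<And>n. 0 \<le> d n" "(\<lambda>n. d n / f n) \<longlonglongrightarrow> A" and "0 < r" "0 \<le> \<kappa>"
  shows "ennreal (\<kappa> * (A / r powr s) powr p) \<le>
    liminf (\<lambda>n. ennreal (\<kappa> / G (f n powr (1 - s)) * G (d n / (f n * r) powr s)))"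
  unfolding le_Liminf_iff
proof (intro allI impI)
  fix y assume y: "y < ennreal (\<kappa> * (A / r powr s) powr p)"
  then obtain y' where y': "y = ennreal y'" "0 \<le> y'" "y' < \<kappa> * (A / r powr s) powr p"
    by (cases y) (auto simp: ennreal_less_iff)
  have "0 \<le> A"
    using d f by (intro LIMSEQ_le_const[OF d(2)]) (auto intro: divide_nonneg_pos)
  have "0 < \<kappa> * (A / r powr s) powr p"
    using y' by linarith
  then have "0 < \<kappa>" "A / r powr s \<noteq> 0"
    using \<open>0 \<le> \<kappa>\<close> by (auto simp: zero_less_mult_iff)
  then have "0 < A / r powr s"
    using \<open>0 \<le> A\<close> by (simp add: less_le)
  define t where "t n = f n powr (1 - s)" for n
  have "filterlim t (at_right 0) sequentially"
    unfolding t_def using f \<open>s < 1\<close>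
    by (intro tendsto_imp_filterlim_at_right tendsto_zero_powrI)
      (auto intro!: always_eventually less_imp_le simp: less_le)
  moreover have "(\<lambda>n. d n / f n / r powr s) \<longlonglongrightarrow> A / r powr s"
    using tendsto_mult_right[OF d(2), of "inverse (r powr s)"] by (simp add: divide_inverse)
  ultimately have "\<forall>\<^sub>F n in sequentially. y' / \<kappa> < G (t n * (d n / f n / r powr s)) / G (t n)"
    using y' \<open>0 < \<kappa>\<close> \<open>0 < A / r powr s\<close>
    by (intro regvar_ratio_eventually_gt[OF mono pos rv]) (auto simp: field_simps)
  then show "\<forall>\<^sub>F n in sequentially. y < ennreal (\<kappa> / G (f n powr (1 - s)) * G (d n / (f n * r) powr s))"
  proof (rule eventually_mono)
    fix n assume "y' / \<kappa> < G (t n * (d n / f n / r powr s)) / G (t n)"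
    moreover have "t n * (d n / f n / r powr s) = d n / (f n * r) powr s"
      using f(1)[of n] \<open>0 < r\<close> by (simp add: t_def powr_diff powr_mult field_simps)
    moreover have "0 < G (t n)"
      using f(1)[of n] by (simp add: t_def pos)
    ultimately show "y < ennreal (\<kappa> / G (f n powr (1 - s)) * G (d n / (f n * r) powr s))"
      using y' \<open>0 < \<kappa>\<close> by (simp add: t_def field_simps ennreal_less_iff)
  qed
qed

section \<open>The nonlocal quotient\<close>

lemma borel_measurable_continuous_on_nonneg_compose:
  fixes G :: "real \<Rightarrow> real"
  assumes "continuous_on {0..} G" and [measurable]: "g \<in> borel_measurable M" and "\<And>x. 0 \<le> g x"
  shows "(\<lambda>x. G (g x)) \<in> borel_measurable M"
proof -
  have "continuous_on UNIV (\<lambda>t. G \<bar>t\<bar>)"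
    by (rule continuous_on_compose2[OF assms(1)]) (auto intro: continuous_intros)
  then have [measurable]: "(\<lambda>t. G \<bar>t\<bar>) \<in> borel_measurable borel"
    by (rule borel_measurable_continuous_onI)
  have "(\<lambda>x. G \<bar>g x\<bar>) \<in> borel_measurable M"
    by measurable
  then show ?thesis
    using assms(3) by simp
qed

lemma nn_integral_ball_dilation_invariant:
  fixes g :: "'a::euclidean_space \<Rightarrow> real"
  assumes [measurable]: "g \<in> borel_measurable borel" and "0 < \<delta>"
  shows "(\<integral>\<^sup>+ y \<in> ball x \<delta>. ennreal (g y / norm (x - y) powr real DIM('a)) \<partial>lborel) =
    (\<integral>\<^sup>+ z \<in> ball 0 1. ennreal (g (x + \<delta> *\<^sub>R z) / norm z powr real DIM('a)) \<partial>lborel)"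
proof -
  have "ennreal (\<delta> ^ DIM('a)) * ennreal (g (x + \<delta> *\<^sub>R z) / (\<delta> * norm z) powr real DIM('a)) =
      ennreal (g (x + \<delta> *\<^sub>R z) / norm z powr real DIM('a))" for z
  proof (cases "z = 0")
    case False
    have "(\<delta> * norm z) powr real DIM('a) = \<delta> ^ DIM('a) * norm z powr real DIM('a)"
      using \<open>0 < \<delta>\<close> by (simp add: powr_mult powr_realpow)
    then show ?thesis
      using \<open>0 < \<delta>\<close> False by (simp add: ennreal_mult'[symmetric])
  qed simp
  note pointwise = this
  have "(\<integral>\<^sup>+ y \<in> ball x \<delta>. ennreal (g y / norm (x - y) powr real DIM('a)) \<partial>lborel) =
      ennreal (\<delta> ^ DIM('a)) *
      (\<integral>\<^sup>+ z \<in> ball 0 1. ennreal (g (x + \<delta> *\<^sub>R z) / norm (x - (x + \<delta> *\<^sub>R z)) powr real DIM('a)) \<partial>lborel)"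
    using \<open>0 < \<delta>\<close> by (rule nn_integral_ball_affine[rotated]) measurable
  also have "\<dots> = (\<integral>\<^sup>+ z \<in> ball 0 1. ennreal (g (x + \<delta> *\<^sub>R z) / norm z powr real DIM('a)) \<partial>lborel)"
    using \<open>0 < \<delta>\<close> by (subst nn_integral_cmult[symmetric]) (auto simp: pointwise mult.assoc[symmetric])
  finally show ?thesis .
qed

lemma tendsto_difference_quotient_direction:
  fixes u :: "'a::real_inner \<Rightarrow> real"
  assumes "(u has_derivative (\<lambda>h. a \<bullet> h)) (at x)"
  shows "((\<lambda>\<delta>. (u (x + \<delta> *\<^sub>R z) - u x) / \<delta>) \<longlongrightarrow> a \<bullet> z) (at 0)"
proof -
  have "((\<lambda>\<delta>. x + \<delta> *\<^sub>R z) has_derivative (\<lambda>h. h *\<^sub>R z)) (at 0)"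
    by (auto intro!: derivative_eq_intros)
  moreover have "(u has_derivative (\<lambda>h. a \<bullet> h)) (at (x + 0 *\<^sub>R z))"
    using assms by simp
  ultimately have "((\<lambda>\<delta>. u (x + \<delta> *\<^sub>R z)) has_derivative (\<lambda>h. a \<bullet> (h *\<^sub>R z))) (at 0)"
    by (rule has_derivative_compose)
  moreover have "(\<lambda>h. a \<bullet> (h *\<^sub>R z)) = (*) (a \<bullet> z)"
    by (simp add: fun_eq_iff)
  ultimately have "((\<lambda>\<delta>. u (x + \<delta> *\<^sub>R z)) has_field_derivative a \<bullet> z) (at 0)"
    by (simp add: has_field_derivative_def)
  then show ?thesis
    by (simp add: has_field_derivative_iff)
qed

lemma Liminf_at_right_ge_sequentially:
  fixes X :: "real \<Rightarrow> 'b::complete_linorder"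
  assumes "\<And>f. (\<And>n. a < f n) \<Longrightarrow> f \<longlonglongrightarrow> a \<Longrightarrow> C \<le> liminf (\<lambda>n. X (f n))"
  shows "C \<le> Liminf (at_right a) X"
  unfolding le_Liminf_iff
proof (intro allI impI)
  fix y assume "y < C"
  show "\<forall>\<^sub>F \<delta> in at_right a. y < X \<delta>"
  proof (rule sequentially_imp_eventually_at_right[of a "a + 1"])
    fix f :: "nat \<Rightarrow> real" assume "\<And>n. a < f n" "f \<longlonglongrightarrow> a"
    then have "y < liminf (\<lambda>n. X (f n))"
      using \<open>y < C\<close> assms by (blast intro: order_less_le_trans)
    then show "\<forall>\<^sub>F n in sequentially. y < X (f n)"
      by (rule less_LiminfD)
  qed simp
qed

definition nonlocal_quotient ::
    "(real \<Rightarrow> real) \<Rightarrow> real \<Rightarrow> real \<Rightarrow> ('a::euclidean_space \<Rightarrow> real) \<Rightarrow> 'a \<Rightarrow> real \<Rightarrow> ennreal" where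
  "nonlocal_quotient G p s u x \<delta> = ennreal (p * (1 - s) / G (\<delta> powr (1 - s))) *
     (\<integral>\<^sup>+ y \<in> ball x \<delta>. ennreal (G (\<bar>u x - u y\<bar> / norm (x - y) powr s) / norm (x - y) powr real DIM('a)) \<partial>lborel)"

lemma nonlocal_quotient_rescaled:
  fixes u :: "'a::euclidean_space \<Rightarrow> real"
  assumes "continuous_on {0..} G" "\<And>t. 0 \<le> t \<Longrightarrow> 0 \<le> G t" "continuous_on UNIV u" "0 < \<delta>"
  shows "nonlocal_quotient G p s u x \<delta> = (\<integral>\<^sup>+ z \<in> ball 0 1.
    ennreal (p * (1 - s) / norm z powr real DIM('a) / G (\<delta> powr (1 - s)) *
      G (\<bar>u x - u (x + \<delta> *\<^sub>R z)\<bar> / (\<delta> * norm z) powr s)) \<partial>lborel)"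
proof -
  have [measurable]: "u \<in> borel_measurable borel"
    using assms(3) by (rule borel_measurable_continuous_onI)
  have [measurable]: "(\<lambda>y. G (\<bar>u x - u y\<bar> / norm (x - y) powr s)) \<in> borel_measurable borel"
    using assms(1) by (rule borel_measurable_continuous_on_nonneg_compose) auto
  have "nonlocal_quotient G p s u x \<delta> = ennreal (p * (1 - s) / G (\<delta> powr (1 - s))) *
      (\<integral>\<^sup>+ z \<in> ball 0 1. ennreal (G (\<bar>u x - u (x + \<delta> *\<^sub>R z)\<bar> / (\<delta> * norm z) powr s) / norm z powr real DIM('a)) \<partial>lborel)"
    unfolding nonlocal_quotient_def using assms(4)
    by (subst nn_integral_ball_dilation_invariant) simp_all
  also have "\<dots> = (\<integral>\<^sup>+ z \<in> ball 0 1.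
      ennreal (p * (1 - s) / norm z powr real DIM('a) / G (\<delta> powr (1 - s)) *
        G (\<bar>u x - u (x + \<delta> *\<^sub>R z)\<bar> / (\<delta> * norm z) powr s)) \<partial>lborel)"
  proof -
    let ?g = "\<lambda>z. G (\<bar>u x - u (x + \<delta> *\<^sub>R z)\<bar> / (\<delta> * norm z) powr s)"
    have [measurable]: "?g \<in> borel_measurable borel"
      using assms(1) by (rule borel_measurable_continuous_on_nonneg_compose) auto
    have "ennreal (p * (1 - s) / G (\<delta> powr (1 - s))) * ennreal (?g z / norm z powr real DIM('a)) =
        ennreal (p * (1 - s) / norm z powr real DIM('a) / G (\<delta> powr (1 - s)) * ?g z)" for z
    proof -
      have "ennreal (p * (1 - s) / G (\<delta> powr (1 - s))) * ennreal (?g z / norm z powr real DIM('a)) =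
          ennreal (p * (1 - s) / G (\<delta> powr (1 - s)) * (?g z / norm z powr real DIM('a)))"
        by (rule ennreal_mult''[symmetric]) (simp add: assms(2))
      then show ?thesis
        by (simp add: divide_inverse ac_simps)
    qed
    then show ?thesis
      by (subst nn_integral_cmult[symmetric]) (simp_all add: mult.assoc[symmetric])
  qed
  finally show ?thesis .
qed

lemma liminf_nonlocal_integrand_ge:
  fixes u :: "'a::euclidean_space \<Rightarrow> real" and f :: "nat \<Rightarrow> real"
  assumes "hypH G p" "s < 1" "(u has_derivative (\<lambda>h. a \<bullet> h)) (at x)"
    and f: "\<And>n. 0 < f n" "f \<longlonglongrightarrow> 0" and "z \<noteq> 0"
  shows "ennreal (p * (1 - s) * (\<bar>a \<bullet> z\<bar> / norm z powr s) powr p / norm z powr real DIM('a)) \<le>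
    liminf (\<lambda>n. ennreal (p * (1 - s) / norm z powr real DIM('a) / G (f n powr (1 - s)) *
      G (\<bar>u x - u (x + f n *\<^sub>R z)\<bar> / (f n * norm z) powr s)))"
proof -
  have mono: "mono_on {0..} G" and pos: "\<And>t. 0 < t \<Longrightarrow> 0 < G t"
    and rv: "\<And>l. 0 < l \<Longrightarrow> ((\<lambda>t. G (l * t) / G t) \<longlongrightarrow> l powr p) (at_right 0)"
    using assms(1) unfolding hypH_def orlicz_def regvar0_def by auto
  have "0 < p"
    using assms(1) by (rule hypH_index_pos)
  have "filterlim f (at 0) sequentially"
    using f by (intro filterlim_atI) (auto intro!: always_eventually simp: less_le)
  from filterlim_compose[OF tendsto_difference_quotient_direction[OF assms(3)] this]
  have "(\<lambda>n. \<bar>(u (x + f n *\<^sub>R z) - u x) / f n\<bar>) \<longlonglongrightarrow> \<bar>a \<bullet> z\<bar>"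
    by (intro tendsto_rabs) simp
  moreover have "\<bar>(u (x + f n *\<^sub>R z) - u x) / f n\<bar> = \<bar>u x - u (x + f n *\<^sub>R z)\<bar> / f n" for n
    using f(1)[of n] by (simp add: abs_minus_commute)
  ultimately have "ennreal (p * (1 - s) / norm z powr real DIM('a) * (\<bar>a \<bullet> z\<bar> / norm z powr s) powr p) \<le>
      liminf (\<lambda>n. ennreal (p * (1 - s) / norm z powr real DIM('a) / G (f n powr (1 - s)) *
        G (\<bar>u x - u (x + f n *\<^sub>R z)\<bar> / (f n * norm z) powr s)))"
    using \<open>z \<noteq> 0\<close> \<open>0 < p\<close> \<open>s < 1\<close>
    by (intro liminf_regvar_difference_quotient_ge[OF mono pos rv \<open>s < 1\<close> f]) auto
  then show ?thesis
    by simp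
qed

lemma liminf_nonlocal_quotient_ge:
  fixes u :: "'a::euclidean_space \<Rightarrow> real" and f :: "nat \<Rightarrow> real"
  assumes "hypH G p" "s < 1" "continuous_on UNIV u" "(u has_derivative (\<lambda>h. a \<bullet> h)) (at x)"
    and f: "\<And>n. 0 < f n" "f \<longlonglongrightarrow> 0"
  shows "(\<integral>\<^sup>+ z \<in> ball 0 1. ennreal (p * (1 - s) * (\<bar>a \<bullet> z\<bar> / norm z powr s) powr p / norm z powr real DIM('a)) \<partial>lborel)
    \<le> liminf (\<lambda>n. nonlocal_quotient G p s u x (f n))"
proof -
  have cont: "continuous_on {0..} G" and nonneg: "\<And>t. 0 \<le> t \<Longrightarrow> 0 \<le> G t"
    using assms(1) unfolding hypH_def orlicz_def by auto
  have [measurable]: "u \<in> borel_measurable borel"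
    using assms(3) by (rule borel_measurable_continuous_onI)
  define h where "h n z = ennreal (p * (1 - s) / norm z powr real DIM('a) / G (f n powr (1 - s)) *
      G (\<bar>u x - u (x + f n *\<^sub>R z)\<bar> / (f n * norm z) powr s)) * indicator (ball 0 1) z" for n z
  have [measurable]: "h n \<in> borel_measurable borel" for n
  proof -
    have [measurable]: "(\<lambda>z. G (\<bar>u x - u (x + f n *\<^sub>R z)\<bar> / (f n * norm z) powr s)) \<in> borel_measurable borel"
      using cont by (rule borel_measurable_continuous_on_nonneg_compose) auto
    show ?thesis
      unfolding h_def by measurable
  qed
  have "ennreal (p * (1 - s) * (\<bar>a \<bullet> z\<bar> / norm z powr s) powr p / norm z powr real DIM('a)) *
      indicator (ball 0 1) z \<le> liminf (\<lambda>n. h n z)" for z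
    using liminf_nonlocal_integrand_ge[OF assms(1,2,4) f, of z]
    by (cases "z = 0") (auto simp: h_def split: split_indicator)
  then have "(\<integral>\<^sup>+ z \<in> ball 0 1. ennreal (p * (1 - s) * (\<bar>a \<bullet> z\<bar> / norm z powr s) powr p / norm z powr real DIM('a)) \<partial>lborel)
      \<le> (\<integral>\<^sup>+ z. liminf (\<lambda>n. h n z) \<partial>lborel)"
    by (intro nn_integral_mono)
  also have "\<dots> \<le> liminf (\<lambda>n. \<integral>\<^sup>+ z. h n z \<partial>lborel)"
    by (rule nn_integral_liminf) simp
  also have "\<dots> = liminf (\<lambda>n. nonlocal_quotient G p s u x (f n))"
    using nonlocal_quotient_rescaled[OF cont nonneg assms(3) f(1)] by (simp add: h_def)
  finally show ?thesis .
qed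

theorem proposition3p6:
  fixes G :: "real \<Rightarrow> real" and p s :: real
    and u :: "'a::euclidean_space \<Rightarrow> real" and gradu :: "'a \<Rightarrow> 'a" and x :: 'a
  assumes "0 < s" and "s < 1"
    and "hypH G p"
    and "continuous_on UNIV gradu"
    and "\<And>z. (u has_derivative (\<lambda>h. gradu z \<bullet> h)) (at z)"
  shows "Liminf (at_right 0)
           (\<lambda>\<delta>. ennreal (p * (1 - s) / G (\<delta> powr (1 - s))) *
              (\<integral>\<^sup>+ y \<in> ball x \<delta>.
                 ennreal (G (\<bar>u x - u y\<bar> / norm (x - y) powr s) / norm (x - y) powr real DIM('a))
               \<partial>lborel))
         \<ge> ennreal (K_const TYPE('a) p * norm (gradu x) powr p)"
proof -
  have "0 < p"
    using assms(3) by (rule hypH_index_pos)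
  have "continuous_on UNIV u"
    using assms(5) by (intro continuous_at_imp_continuous_on) (auto intro: has_derivative_continuous)
  have "ennreal (K_const TYPE('a) p * norm (gradu x) powr p) \<le> (\<integral>\<^sup>+ z \<in> ball 0 1.
      ennreal (p * (1 - s) * (\<bar>gradu x \<bullet> z\<bar> / norm z powr s) powr p / norm z powr real DIM('a)) \<partial>lborel)"
    using \<open>0 < p\<close> assms(2) by (rule K_const_mult_le_nn_integral_ball)
  also have "\<dots> \<le> Liminf (at_right 0) (nonlocal_quotient G p s u x)"
    by (intro Liminf_at_right_ge_sequentially
        liminf_nonlocal_quotient_ge[OF assms(3,2) \<open>continuous_on UNIV u\<close> assms(5)])
  finally show ?thesis
    unfolding nonlocal_quotient_def by simp
qed

end
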